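(* Let $\nu$ be an eigenvalue of the nonlocal problem with $\nu\notin\{\lambda_n\}_{n\in\mathbb N_0}$. Then $\nu$ solves $$\frac1M=\sum_{n\in\mathbb N_0}\frac{\beta_n^2}{\lambda_n-\nu},\qquad \beta_n=\int_0^1C(y)\psi_n(y)\,dy.$$ Conversely, if $\nu\in\mathbb R$ solves this equation, then $\nu$ is an eigenvalue of the nonlocal problem.
   Context: $\mathbb{T}=[0,1]$ with endpoints identified; $D,\kappa>0$; $U\in W^{2,2}(\mathbb{T})$ is a nonconstant solution of $0=DU_{xx}-U+\kappa e^U/\int_0^1e^Udy$ (periodic). Set $A(x)=\kappa\frac{e^{U(x)}}{\int_0^1e^U}-1$, $M=\frac{\kappa}{(\int_0^1e^U)^2}>0$, $C(x)=e^{U(x)}$. Nonlocal eigenvalue problem: $D\varphi_{xx}+(A(x)-\nu)\varphi=MC(x)\int_0^1C(y)\varphi(y)dy$, $\varphi\not\equiv0$, periodic boundary conditions. Local problem: $D\psi_{xx}+(A(x)-\lambda)\psi=0$, periodic; its eigenpairs $(\lambda_n,\psi_n)_{n\in\mathbb N_0}$ are real with $\{\psi_n\}$ an orthonormal basis of $L^2(0,1)$ and $\lambda_0>\lambda_1\ge\lambda_2>\lambda_3\ge\lambda_4>\cdots$. *)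

theory Defs
  imports "HOL-Analysis.Analysis"
begin

text \<open>Functions on the circle T = [0,1] with endpoints identified are represented
as 1-periodic functions on the real line.\<close>

definition per1 :: "(real \<Rightarrow> real) \<Rightarrow> bool" where
  "per1 f \<longleftrightarrow> (\<forall>x. f (x + 1) = f x)"

definition twice_diff :: "(real \<Rightarrow> real) \<Rightarrow> bool" where
  "twice_diff f \<longleftrightarrow> (\<forall>x. f differentiable at x) \<and> (\<forall>x. deriv f differentiable at x)"

definition L2_01 :: "(real \<Rightarrow> real) \<Rightarrow> bool" where
  "L2_01 f \<longleftrightarrow> f \<in> borel_measurable (lebesgue_on {0..1}) \<and>
     integrable (lebesgue_on {0..1}) (\<lambda>x. (f x)\<^sup>2)"

definition ip01 :: "(real \<Rightarrow> real) \<Rightarrow> (real \<Rightarrow> real) \<Rightarrow> real" where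
  "ip01 f g = integral\<^sup>L (lebesgue_on {0..1}) (\<lambda>x. f x * g x)"

definition ONB01 :: "(nat \<Rightarrow> real \<Rightarrow> real) \<Rightarrow> bool" where
  "ONB01 \<psi> \<longleftrightarrow> (\<forall>n. L2_01 (\<psi> n)) \<and>
     (\<forall>m n. ip01 (\<psi> m) (\<psi> n) = (if m = n then 1 else 0)) \<and>
     (\<forall>f. L2_01 f \<longrightarrow>
        (\<lambda>N. ip01 (\<lambda>x. f x - (\<Sum>n<N. ip01 f (\<psi> n) * \<psi> n x))
                   (\<lambda>x. f x - (\<Sum>n<N. ip01 f (\<psi> n) * \<psi> n x))) \<longlonglongrightarrow> 0)"

definition Zc :: "(real \<Rightarrow> real) \<Rightarrow> real" where
  "Zc U = integral {0..1} (\<lambda>y. exp (U y))"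

definition Acoef :: "real \<Rightarrow> (real \<Rightarrow> real) \<Rightarrow> real \<Rightarrow> real" where
  "Acoef \<kappa> U x = \<kappa> * exp (U x) / Zc U - 1"

definition Mc :: "real \<Rightarrow> (real \<Rightarrow> real) \<Rightarrow> real" where
  "Mc \<kappa> U = \<kappa> / (Zc U)\<^sup>2"

definition Cf :: "(real \<Rightarrow> real) \<Rightarrow> real \<Rightarrow> real" where
  "Cf U x = exp (U x)"

definition steady_state :: "real \<Rightarrow> real \<Rightarrow> (real \<Rightarrow> real) \<Rightarrow> bool" where
  "steady_state D \<kappa> U \<longleftrightarrow> per1 U \<and> twice_diff U \<and>
     (\<forall>x. D * deriv (deriv U) x - U x + \<kappa> * exp (U x) / Zc U = 0) \<and>
     \<not> (\<exists>c. \<forall>x. U x = c)"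

definition nonlocal_eig :: "real \<Rightarrow> real \<Rightarrow> (real \<Rightarrow> real) \<Rightarrow> real \<Rightarrow> bool" where
  "nonlocal_eig D \<kappa> U \<nu> \<longleftrightarrow> (\<exists>\<phi>. per1 \<phi> \<and> twice_diff \<phi> \<and> (\<exists>x. \<phi> x \<noteq> 0) \<and>
     (\<forall>x. D * deriv (deriv \<phi>) x + (Acoef \<kappa> U x - \<nu>) * \<phi> x =
          Mc \<kappa> U * Cf U x * integral {0..1} (\<lambda>y. Cf U y * \<phi> y)))"

definition local_eigpair :: "real \<Rightarrow> real \<Rightarrow> (real \<Rightarrow> real) \<Rightarrow> real \<Rightarrow> (real \<Rightarrow> real) \<Rightarrow> bool" where
  "local_eigpair D \<kappa> U lam \<psi> \<longleftrightarrow> per1 \<psi> \<and> twice_diff \<psi> \<and> (\<exists>x. \<psi> x \<noteq> 0) \<and>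
     (\<forall>x. D * deriv (deriv \<psi>) x + (Acoef \<kappa> U x - lam) * \<psi> x = 0)"

end

theory Submission
  imports Defs
begin

(*
  Pairing the nonlocal equation  D phi'' + (A - nu) phi = M C <C, phi>  with the local
  eigenfunction psi_n and integrating by parts over one period gives
  (lambda_n - nu) <phi, psi_n> = M <C, phi> beta_n.  Parseval's identity for <C, phi> then reads
  <C, phi> = M <C, phi> * sum_n beta_n^2 / (lambda_n - nu), and <C, phi> is nonzero, since
  otherwise phi solves the local problem at nu, which has only the trivial periodic solution.

  Conversely, if nu is not a local eigenvalue, the periodic problem D phi'' + (A - nu) phi = M C
  has trivial kernel and hence, by the Fredholm alternative for periodic linear equations, a
  solution; the same computation shows <C, phi> = 1, so phi is a nonlocal eigenfunction.
  Solutions of the linear equations on the whole line come from Banach's fixed point theorem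
  for the Picard map in a weighted sup norm.
*)

section \<open>Periodic functions\<close>

lemma per1_add_nat: "per1 f \<Longrightarrow> f (x + real n) = f x"
  by (induction n arbitrary: x) (auto simp: per1_def add.assoc[symmetric])

lemma per1_add_int: "per1 f \<Longrightarrow> f (x + real_of_int k) = f x"
  using per1_add_nat[of f x "nat k"] per1_add_nat[of f "x + real_of_int k" "nat (- k)"]
  by (cases "k \<ge> 0") auto

lemma per1_frac: "per1 f \<Longrightarrow> f x = f (frac x)"
  using per1_add_int[of f "frac x" "\<lfloor>x\<rfloor>"] by (simp add: frac_def)

lemma frac_in_01: "frac x \<in> {0..1}"
  using frac_lt_1[of x] by auto

lemma per1_bounded:
  assumes "per1 f" and "continuous_on UNIV f"
  obtains B where "\<And>x. \<bar>f x\<bar> \<le> B"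
proof -
  have "compact (f ` {0..1})"
    by (rule compact_continuous_image) (auto intro: continuous_on_subset[OF assms(2)])
  then obtain B where "\<forall>y\<in>f ` {0..1}. norm y \<le> B"
    using compact_imp_bounded bounded_iff by metis
  then have "\<bar>f (frac x)\<bar> \<le> B" for x
    using frac_in_01[of x] by auto
  then show thesis
    using per1_frac[OF assms(1)] by (metis that)
qed

lemma per1_eq_0: "per1 f \<Longrightarrow> (\<And>x. x \<in> {0..1} \<Longrightarrow> f x = 0) \<Longrightarrow> f x = 0"
  using per1_frac[of f x] frac_in_01[of x] by metis

lemma per1_deriv:
  assumes "per1 f" and "\<And>x. f differentiable at x"
  shows "per1 (deriv f)"
  unfolding per1_def
proof
  fix x
  have "(f has_real_derivative deriv f (x + 1)) (at (x + 1))"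
    using assms(2) by (simp add: DERIV_deriv_iff_real_differentiable)
  then have "((\<lambda>x. f (x + 1)) has_real_derivative deriv f (x + 1)) (at x)"
    by (simp add: DERIV_shift)
  moreover have "(\<lambda>x. f (x + 1)) = f"
    using assms(1) by (auto simp: per1_def)
  ultimately show "deriv f (x + 1) = deriv f x"
    using DERIV_imp_deriv by metis
qed

lemma twice_diff_continuous: "twice_diff f \<Longrightarrow> continuous_on UNIV f"
  unfolding twice_diff_def
  by (meson continuous_at_imp_continuous_on differentiable_imp_continuous_within)

lemma twice_diff_has_derivatives:
  assumes "twice_diff f"
  shows "(f has_real_derivative deriv f x) (at x)"
    and "(deriv f has_real_derivative deriv (deriv f) x) (at x)"
  using assms by (auto simp: twice_diff_def DERIV_deriv_iff_real_differentiable)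


lemma green_identity_per1:
  assumes f: "twice_diff f" "per1 f" and g: "twice_diff g" "per1 g"
  shows "((\<lambda>x. deriv (deriv f) x * g x - f x * deriv (deriv g) x) has_integral 0) {0..1}"
proof -
  define F where "F x = deriv f x * g x - f x * deriv g x" for x
  have "(F has_real_derivative deriv (deriv f) x * g x - f x * deriv (deriv g) x) (at x)" for x
    unfolding F_def using twice_diff_has_derivatives[OF f(1)] twice_diff_has_derivatives[OF g(1)]
    by (auto intro!: derivative_eq_intros simp: algebra_simps)
  then have "((\<lambda>x. deriv (deriv f) x * g x - f x * deriv (deriv g) x) has_integral F 1 - F 0) {0..1}"
    by (intro fundamental_theorem_of_calculus)
       (auto simp: has_real_derivative_iff_has_vector_derivative[symmetric]
         intro: has_field_derivative_at_within)
  moreover have "per1 (deriv f)" "per1 (deriv g)"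
    using per1_deriv f g by (auto simp: twice_diff_def)
  then have "F 1 = F 0"
    using f(2) g(2) unfolding F_def per1_def by (metis add_0)
  ultimately show ?thesis
    by simp
qed

section \<open>Linear second-order equations on the line\<close>

definition prim :: "(real \<Rightarrow> real) \<Rightarrow> real \<Rightarrow> real" where
  "prim g x = (if 0 \<le> x then integral {0..x} g else - integral {x..0} g)"

lemma prim_0 [simp]: "prim g 0 = 0"
  by (simp add: prim_def)

lemma prim_eq_integral_diff:
  assumes g: "continuous_on UNIV g" and "a \<le> 0" "a \<le> x"
  shows "prim g x = integral {a..x} g - integral {a..0} g"
proof -
  have "integral {a..u} g + integral {u..v} g = integral {a..v} g" if "a \<le> u" "u \<le> v" for u v
    by (rule Henstock_Kurzweil_Integration.integral_combine)
       (use that in \<open>auto intro!: integrable_continuous_real continuous_on_subset[OF g]\<close>)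
  from this[of 0 x] this[of x 0] show ?thesis
    using assms by (cases "0 \<le> x") (auto simp: prim_def)
qed

lemma has_real_derivative_prim:
  assumes g: "continuous_on UNIV g"
  shows "(prim g has_real_derivative g x) (at x)"
proof -
  define a where "a = - \<bar>x\<bar> - 1"
  define b where "b = \<bar>x\<bar> + 1"
  have x: "x \<in> {a<..<b}"
    by (auto simp: a_def b_def)
  have "((\<lambda>y. integral {a..y} g - integral {a..0} g) has_real_derivative g x) (at x within {a..b})"
    using integral_has_real_derivative[of a b g x] x continuous_on_subset[OF g]
    by (auto intro!: derivative_eq_intros)
  moreover have "at x within {a..b} = at x"
    using x by (intro at_within_interior) auto
  ultimately have "((\<lambda>y. integral {a..y} g - integral {a..0} g) has_real_derivative g x) (at x)"
    by simp
  then show ?thesis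
    by (rule has_field_derivative_transform_within_open[where S="{a<..<b}"])
       (use x in \<open>auto simp: a_def intro!: prim_eq_integral_diff[OF g, symmetric]\<close>)
qed

lemma continuous_on_prim: "continuous_on UNIV g \<Longrightarrow> continuous_on UNIV (prim g)"
  by (meson DERIV_isCont continuous_at_imp_continuous_on has_real_derivative_prim)

lemma prim_diff:
  assumes "continuous_on UNIV f" and "continuous_on UNIV g"
  shows "prim (\<lambda>t. f t - g t) x = prim f x - prim g x"
proof -
  have "h integrable_on {a..b}" if "continuous_on UNIV h" for h :: "real \<Rightarrow> real" and a b
    by (rule integrable_continuous_real) (rule continuous_on_subset[OF that], auto)
  then show ?thesis
    using assms by (simp add: prim_def integral_diff)
qed

lemma abs_prim_le_exp:
  assumes g: "continuous_on UNIV g" and L: "L > 0"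
    and bound: "\<And>t. \<bar>g t\<bar> \<le> K * exp (L * \<bar>t\<bar>)"
  shows "\<bar>prim g x\<bar> \<le> K * exp (L * \<bar>x\<bar>) / L"
proof -
  have K: "K \<ge> 0"
    using bound[of 0] by simp
  note d = has_real_derivative_prim[OF g]
  show ?thesis
  proof (cases "0 \<le> x")
    case True
    have "K * exp (L * 0) / L + s * prim g 0 \<le> K * exp (L * x) / L + s * prim g x"
      if "s \<in> {-1, 1}" for s
      apply (rule DERIV_nonneg_imp_nondecreasing[OF True, of "\<lambda>y. K * exp (L * y) / L + s * prim g y"])
      subgoal for y
        by (rule exI[of _ "K * exp (L * y) + s * g y"])
           (use that bound[of y] L in \<open>auto intro!: derivative_eq_intros d simp: abs_le_iff\<close>)
      done
    from this[of 1] this[of "-1"] show ?thesis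
      using True divide_nonneg_pos[OF K L] by (simp add: abs_le_iff)
  next
    case False
    have "K * exp (- L * 0) / L + s * prim g 0 \<le> K * exp (- L * x) / L + s * prim g x"
      if "s \<in> {-1, 1}" for s
      apply (rule DERIV_nonpos_imp_nonincreasing[of x 0 "\<lambda>y. K * exp (- L * y) / L + s * prim g y"])
      using False apply simp
      subgoal for y
        by (rule exI[of _ "- K * exp (- L * y) + s * g y"])
           (use that bound[of y] L in \<open>auto intro!: derivative_eq_intros d simp: abs_le_iff\<close>)
      done
    from this[of 1] this[of "-1"] show ?thesis
      using False divide_nonneg_pos[OF K L] by (simp add: abs_le_iff)
  qed
qed

definition solves_lin_ode ::
    "(real \<Rightarrow> real) \<Rightarrow> (real \<Rightarrow> real) \<Rightarrow> (real \<Rightarrow> real) \<Rightarrow> (real \<Rightarrow> real) \<Rightarrow> bool" where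
  "solves_lin_ode p h y y' \<longleftrightarrow>
     (\<forall>x. (y has_real_derivative y' x) (at x) \<and> (y' has_real_derivative h x - p x * y x) (at x))"

lemma exp_ge_abs: "L \<ge> 1 \<Longrightarrow> \<bar>x\<bar> \<le> exp (L * \<bar>x::real\<bar>)"
  using exp_ge_add_one_self[of "L * \<bar>x\<bar>"] mult_right_mono[of 1 L "\<bar>x\<bar>"] by linarith

locale bielecki_picard =
  fixes p h :: "real \<Rightarrow> real" and P H a b :: real
  assumes continuous_p: "continuous_on UNIV p" and continuous_h: "continuous_on UNIV h"
    and p_bound: "\<And>x. \<bar>p x\<bar> \<le> P" and h_bound: "\<And>x. \<bar>h x\<bar> \<le> H"
begin

text \<open>Double integration against the weight exp (rate * |t|) gains the factor
  1 / rate^2 <= 1 / (2 P), so the Picard map contracts by 1/2 in the weighted sup norm.\<close>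

definition rate :: real where "rate = 2 * P + 2"

definition weight :: "real \<Rightarrow> real" where "weight t = exp (rate * \<bar>t\<bar>)"

definition picard :: "(real \<Rightarrow> real) \<Rightarrow> real \<Rightarrow> real" where
  "picard y x = a + b * x + prim (prim (\<lambda>t. h t - p t * y t)) x"

lemma P_nonneg: "P \<ge> 0" and H_nonneg: "H \<ge> 0"
  using p_bound[of 0] h_bound[of 0] by auto

lemma rate_ge_1: "rate \<ge> 1" and rate_sq: "2 * P \<le> rate * rate"
proof -
  show "rate \<ge> 1"
    using P_nonneg by (simp add: rate_def)
  then have "rate \<le> rate * rate"
    by (simp add: mult_le_cancel_left1)
  then show "2 * P \<le> rate * rate"
    by (simp add: rate_def)
qed

lemma weight_ge_1: "weight t \<ge> 1" and weight_pos: "weight t > 0"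
  using rate_ge_1 by (auto simp: weight_def)

lemma continuous_on_weight: "continuous_on UNIV weight"
  unfolding weight_def by (intro continuous_intros)

lemma abs_prim_prim_le_weight:
  assumes g: "continuous_on UNIV g" and bound: "\<And>t. \<bar>g t\<bar> \<le> K * weight t"
  shows "\<bar>prim (prim g) x\<bar> \<le> K * weight x / (rate * rate)"
proof -
  have L: "rate > 0"
    using rate_ge_1 by simp
  have "\<bar>prim g s\<bar> \<le> (K / rate) * exp (rate * \<bar>s\<bar>)" for s
    using abs_prim_le_exp[OF g L, of K s] bound by (simp add: weight_def)
  then have "\<bar>prim (prim g) x\<bar> \<le> (K / rate) * exp (rate * \<bar>x\<bar>) / rate"
    by (intro abs_prim_le_exp continuous_on_prim g L)
  then show ?thesis
    by (simp add: weight_def)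
qed

lemma continuous_on_picard_integrand:
  "continuous_on UNIV y \<Longrightarrow> continuous_on UNIV (\<lambda>t. h t - p t * y t)"
  by (intro continuous_intros continuous_p continuous_h)

lemma continuous_on_picard: "continuous_on UNIV y \<Longrightarrow> continuous_on UNIV (picard y)"
  unfolding picard_def[abs_def]
  by (intro continuous_intros continuous_on_prim continuous_on_picard_integrand)

lemma abs_picard_le:
  assumes y: "continuous_on UNIV y" and bound: "\<And>t. \<bar>y t\<bar> \<le> K * weight t"
  shows "\<bar>picard y x\<bar> \<le> (\<bar>a\<bar> + \<bar>b\<bar> + (H + P * K) / (rate * rate)) * weight x"
proof -
  have K: "K \<ge> 0"
    using bound[of 0] by (simp add: weight_def)
  have "\<bar>h t - p t * y t\<bar> \<le> (H + P * K) * weight t" for t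
  proof -
    have "\<bar>h t - p t * y t\<bar> \<le> H + P * (K * weight t)"
      using h_bound[of t] mult_mono[OF p_bound[of t] bound[of t]] P_nonneg
      by (simp add: abs_mult order_trans[OF abs_triangle_ineq4])
    also have "\<dots> \<le> (H + P * K) * weight t"
      using mult_left_mono[OF weight_ge_1[of t] H_nonneg] by (simp add: algebra_simps)
    finally show ?thesis .
  qed
  then have "\<bar>prim (prim (\<lambda>t. h t - p t * y t)) x\<bar> \<le> (H + P * K) / (rate * rate) * weight x"
    using abs_prim_prim_le_weight[OF continuous_on_picard_integrand[OF y]] by simp
  moreover have "\<bar>a\<bar> \<le> \<bar>a\<bar> * weight x" "\<bar>b * x\<bar> \<le> \<bar>b\<bar> * weight x"
    using mult_left_mono[OF weight_ge_1[of x], of "\<bar>a\<bar>"]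
      mult_left_mono[OF exp_ge_abs[OF rate_ge_1, of x], of "\<bar>b\<bar>"]
    by (simp_all add: weight_def abs_mult)
  ultimately show ?thesis
    unfolding picard_def by (simp add: algebra_simps)
qed

lemma picard_contraction:
  assumes y: "continuous_on UNIV y" and z: "continuous_on UNIV z"
    and d: "\<And>t. \<bar>y t - z t\<bar> \<le> d * weight t"
  shows "\<bar>picard y x - picard z x\<bar> \<le> d / 2 * weight x"
proof -
  define r where "r t = p t * (z t - y t)" for t
  have "picard y x - picard z x = prim (\<lambda>s. prim (\<lambda>t. h t - p t * y t) s - prim (\<lambda>t. h t - p t * z t) s) x"
    unfolding picard_def
    by (simp add: prim_diff continuous_on_prim continuous_on_picard_integrand y z)
  also have "(\<lambda>s. prim (\<lambda>t. h t - p t * y t) s - prim (\<lambda>t. h t - p t * z t) s) = prim r"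
    unfolding r_def by (auto simp: prim_diff[symmetric] continuous_on_picard_integrand y z algebra_simps)
  finally have "\<bar>picard y x - picard z x\<bar> \<le> P * d * weight x / (rate * rate)"
  proof (simp only:, intro abs_prim_prim_le_weight)
    show "continuous_on UNIV r"
      unfolding r_def[abs_def] by (intro continuous_intros continuous_p y z)
    show "\<bar>r t\<bar> \<le> P * d * weight t" for t
      using mult_mono[OF p_bound[of t] d[of t]] P_nonneg
      by (simp add: r_def abs_mult abs_minus_commute mult.assoc)
  qed
  also have "\<dots> \<le> d / 2 * weight x"
  proof -
    have "d \<ge> 0"
      using d[of 0] by (simp add: weight_def)
    then have "2 * P * d \<le> rate * rate * d"
      using mult_right_mono[OF rate_sq] by blast
    then have "P * d / (rate * rate) \<le> d / 2"
      using rate_ge_1 by (simp add: field_simps)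
    from mult_right_mono[OF this less_imp_le[OF weight_pos[of x]]] show ?thesis
      by (simp add: mult.commute mult.left_commute)
  qed
  finally show ?thesis .
qed

lemma picard_fixed_point: "\<exists>y. continuous_on UNIV y \<and> picard y = y"
proof -
  define lift :: "(real \<Rightarrow>\<^sub>C real) \<Rightarrow> real \<Rightarrow> real" where "lift w t = weight t * w t" for w t
  have cont_lift: "continuous_on UNIV (lift w)" for w
    unfolding lift_def[abs_def] by (intro continuous_intros continuous_on_weight) simp
  have in_bcontfun: "(\<lambda>x. picard (lift w) x / weight x) \<in> bcontfun" for w
  proof (rule bcontfun_normI)
    show "continuous_on UNIV (\<lambda>x. picard (lift w) x / weight x)"
      using weight_pos
      by (intro continuous_intros continuous_on_picard cont_lift continuous_on_weight)
         (auto simp: less_imp_neq[symmetric])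
    have "\<bar>lift w t\<bar> \<le> norm w * weight t" for t
      using norm_bounded[of w t] weight_pos[of t] by (simp add: lift_def abs_mult)
    then show "norm (picard (lift w) x / weight x) \<le> \<bar>a\<bar> + \<bar>b\<bar> + (H + P * norm w) / (rate * rate)" for x
      using abs_picard_le[OF cont_lift] weight_pos[of x] by (simp add: divide_le_eq)
  qed
  define T where "T w = Bcontfun (\<lambda>x. picard (lift w) x / weight x)" for w
  have T: "apply_bcontfun (T w) x = picard (lift w) x / weight x" for w x
    unfolding T_def using Bcontfun_inverse[OF in_bcontfun] by simp
  have "dist (T w1) (T w2) \<le> 1/2 * dist w1 w2" for w1 w2
  proof (rule dist_bound)
    fix x
    have "\<bar>lift w1 t - lift w2 t\<bar> \<le> dist w1 w2 * weight t" for t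
      using dist_bounded[of w1 t w2] weight_pos[of t]
      by (simp add: lift_def dist_real_def right_diff_distrib[symmetric] abs_mult)
    then have "\<bar>picard (lift w1) x - picard (lift w2) x\<bar> \<le> dist w1 w2 / 2 * weight x"
      by (intro picard_contraction cont_lift)
    then show "dist (T w1 x) (T w2 x) \<le> 1/2 * dist w1 w2"
      using weight_pos[of x]
      by (simp add: T dist_real_def diff_divide_distrib[symmetric] abs_div divide_le_eq)
  qed
  then obtain w where "T w = w"
    using banach_fix_type[of "1/2" T] by auto
  then have "picard (lift w) x = lift w x" for x
    using T[of w x] weight_pos[of x] by (simp add: lift_def field_simps)
  then have "picard (lift w) = lift w"
    by blast
  then show ?thesis
    using cont_lift by blast
qed

lemma solves_lin_ode_picard_fixed_point:
  assumes y: "continuous_on UNIV y" and fixed: "picard y = y"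
  shows "solves_lin_ode p h y (\<lambda>x. b + prim (\<lambda>t. h t - p t * y t) x)"
proof -
  have "(picard y has_real_derivative b + prim (\<lambda>t. h t - p t * y t) x) (at x)" for x
    unfolding picard_def[abs_def]
    by (auto intro!: derivative_eq_intros has_real_derivative_prim continuous_on_prim
        continuous_on_picard_integrand y)
  moreover have "((\<lambda>x. b + prim (\<lambda>t. h t - p t * y t) x) has_real_derivative h x - p x * y x) (at x)" for x
    by (auto intro!: derivative_eq_intros has_real_derivative_prim continuous_on_picard_integrand y)
  ultimately show ?thesis
    using fixed by (simp add: solves_lin_ode_def)
qed

end

lemma lin_ode_ivp_exists:
  assumes "continuous_on UNIV p" and "continuous_on UNIV h"
    and "\<And>x. \<bar>p x\<bar> \<le> P" and "\<And>x. \<bar>h x\<bar> \<le> H"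
  obtains y y' where "solves_lin_ode p h y y'" and "y 0 = a" and "y' 0 = b"
proof -
  interpret bielecki_picard p h P H a b
    using assms by unfold_locales
  obtain y where "continuous_on UNIV y" and "picard y = y"
    using picard_fixed_point by blast
  moreover have "y 0 = a"
    using \<open>picard y = y\<close> picard_def[of y 0] by simp
  ultimately show thesis
    using solves_lin_ode_picard_fixed_point
    by (intro that[of y "\<lambda>x. b + prim (\<lambda>t. h t - p t * y t) x"]) auto
qed

lemma nonneg_eq_0_if_abs_deriv_le:
  fixes f f' :: "real \<Rightarrow> real"
  assumes f': "\<And>x. (f has_real_derivative f' x) (at x)"
    and bound: "\<And>x. \<bar>f' x\<bar> \<le> K * f x"
    and nonneg: "\<And>x. f x \<ge> 0" and f0: "f 0 = 0"
  shows "f x = 0"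
proof (cases "0 \<le> x")
  case True
  have "f x * exp (- K * x) \<le> f 0 * exp (- K * 0)"
    apply (rule DERIV_nonpos_imp_nonincreasing[OF True, of "\<lambda>y. f y * exp (- K * y)"])
    subgoal for y
      apply (intro exI[of _ "(f' y - K * f y) * exp (- K * y)"] conjI)
       apply (auto intro!: derivative_eq_intros f' simp: algebra_simps)[1]
      using bound[of y] by (auto simp: abs_le_iff intro!: mult_nonpos_nonneg)
    done
  then show ?thesis
    using f0 nonneg[of x] by (simp add: mult_le_0_iff)
next
  case False
  have "f x * exp (K * x) \<le> f 0 * exp (K * 0)"
    apply (rule DERIV_nonneg_imp_nondecreasing[of x 0 "\<lambda>y. f y * exp (K * y)"])
    using False apply simp
    subgoal for y
      apply (intro exI[of _ "(f' y + K * f y) * exp (K * y)"] conjI)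
       apply (auto intro!: derivative_eq_intros f' simp: algebra_simps)[1]
      using bound[of y] by (auto simp: abs_le_iff intro!: mult_nonneg_nonneg)
    done
  then show ?thesis
    using f0 nonneg[of x] by (simp add: mult_le_0_iff)
qed

lemma solves_lin_ode_lincomb:
  assumes "solves_lin_ode p h y y'" and "solves_lin_ode p k z z'"
  shows "solves_lin_ode p (\<lambda>x. c * h x + d * k x) (\<lambda>x. c * y x + d * z x) (\<lambda>x. c * y' x + d * z' x)"
  using assms unfolding solves_lin_ode_def
  by (auto intro!: derivative_eq_intros simp: algebra_simps)

lemma solves_lin_ode_unique_zero:
  assumes sol: "solves_lin_ode p (\<lambda>_. 0) w w'" and p: "\<And>x. \<bar>p x\<bar> \<le> P"
    and init: "w 0 = 0" "w' 0 = 0"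
  shows "w x = 0"
proof -
  define energy where "energy x = (w x)\<^sup>2 + (w' x)\<^sup>2" for x
  have "(energy has_real_derivative 2 * w x * w' x * (1 - p x)) (at x)" for x
    using sol unfolding solves_lin_ode_def energy_def
    by (auto intro!: derivative_eq_intros simp: algebra_simps)
  moreover have "\<bar>2 * w x * w' x * (1 - p x)\<bar> \<le> (1 + P) * energy x" for x
  proof -
    have "\<bar>2 * w x * w' x * (1 - p x)\<bar> = 2 * \<bar>w x\<bar> * \<bar>w' x\<bar> * \<bar>1 - p x\<bar>"
      by (simp add: abs_mult)
    also have "\<dots> \<le> energy x * (1 + P)"
      using sum_squares_bound[of "\<bar>w x\<bar>" "\<bar>w' x\<bar>"] p[of x]
      by (intro mult_mono) (auto simp: energy_def)
    finally show ?thesis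
      by (simp add: mult.commute)
  qed
  ultimately have "energy x = 0"
    by (rule nonneg_eq_0_if_abs_deriv_le) (auto simp: energy_def init)
  then show ?thesis
    by (simp add: energy_def add_nonneg_eq_0_iff)
qed

lemma solves_lin_ode_unique:
  assumes "solves_lin_ode p h y y'" and "solves_lin_ode p h z z'" and "\<And>x. \<bar>p x\<bar> \<le> P"
    and "y 0 = z 0" and "y' 0 = z' 0"
  shows "y x = z x"
proof -
  have "solves_lin_ode p (\<lambda>_. 0) (\<lambda>x. y x - z x) (\<lambda>x. y' x - z' x)"
    using solves_lin_ode_lincomb[OF assms(1,2), of 1 "-1"] by simp
  from solves_lin_ode_unique_zero[OF this assms(3)] show ?thesis
    using assms(4,5) by simp
qed

lemma solves_lin_ode_deriv_eq:
  "solves_lin_ode p h y y' \<Longrightarrow> y' x = deriv y x"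
  by (metis DERIV_imp_deriv solves_lin_ode_def)

lemma solves_lin_ode_twice_diff:
  assumes "solves_lin_ode p h y y'"
  shows "twice_diff y" and "deriv (deriv y) x = h x - p x * y x"
proof -
  have "deriv y = y'"
    using solves_lin_ode_deriv_eq[OF assms] by auto
  then show "twice_diff y" "deriv (deriv y) x = h x - p x * y x"
    using assms unfolding solves_lin_ode_def twice_diff_def real_differentiable_def
    by (auto intro: DERIV_imp_deriv)
qed

lemma solves_lin_ode_periodic:
  assumes sol: "solves_lin_ode p h y y'" and p: "\<And>x. \<bar>p x\<bar> \<le> P"
    and "per1 p" and "per1 h" and "y 1 = y 0" and "y' 1 = y' 0"
  shows "per1 y"
  unfolding per1_def
proof
  fix x
  have "solves_lin_ode p h (\<lambda>x. y (x + 1)) (\<lambda>x. y' (x + 1))"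
    unfolding solves_lin_ode_def
  proof
    fix x
    have "(y has_real_derivative y' (x + 1)) (at (x + 1))"
      and "(y' has_real_derivative h (x + 1) - p (x + 1) * y (x + 1)) (at (x + 1))"
      using sol by (auto simp: solves_lin_ode_def)
    then show "((\<lambda>x. y (x + 1)) has_real_derivative y' (x + 1)) (at x) \<and>
        ((\<lambda>x. y' (x + 1)) has_real_derivative h x - p x * y (x + 1)) (at x)"
      using \<open>per1 p\<close> \<open>per1 h\<close> by (simp add: DERIV_shift per1_def)
  qed
  from solves_lin_ode_unique[OF this sol p] show "y (x + 1) = y x"
    using assms(5,6) by simp
qed

lemma lin2_solvable:
  fixes m11 m12 m21 m22 u v :: real
  assumes "m11 * m22 - m12 * m21 \<noteq> 0"
  obtains s t where "m11 * s + m12 * t = u" and "m21 * s + m22 * t = v"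
proof
  let ?det = "m11 * m22 - m12 * m21"
  have "m11 * (m22 * u - m12 * v) + m12 * (m11 * v - m21 * u) = ?det * u"
    and "m21 * (m22 * u - m12 * v) + m22 * (m11 * v - m21 * u) = ?det * v"
    by (simp_all add: algebra_simps)
  then show "m11 * ((m22 * u - m12 * v) / ?det) + m12 * ((m11 * v - m21 * u) / ?det) = u"
    and "m21 * ((m22 * u - m12 * v) / ?det) + m22 * ((m11 * v - m21 * u) / ?det) = v"
    using assms by (simp_all add: times_divide_eq_right add_divide_distrib[symmetric])
qed

lemma lin2_kernel:
  fixes m11 m12 m21 m22 :: real
  assumes "m11 * m22 - m12 * m21 = 0"
  obtains s t where "(s, t) \<noteq> (0, 0)" and "m11 * s + m12 * t = 0" and "m21 * s + m22 * t = 0"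
proof (cases "(m11, m12) = (0, 0)")
  case True
  show ?thesis
  proof (cases "(m21, m22) = (0, 0)")
    case False
    then show ?thesis
      using True by (intro that[of m22 "- m21"]) auto
  qed (use True in \<open>intro that[of 1 0], auto\<close>)
next
  case False
  then show ?thesis
    using assms by (intro that[of m12 "- m11"]) (auto simp: algebra_simps)
qed

lemma monodromy_det_nonzero:
  assumes y1: "solves_lin_ode p (\<lambda>_. 0) y1 y1'" and init1: "y1 0 = 1" "y1' 0 = 0"
    and y2: "solves_lin_ode p (\<lambda>_. 0) y2 y2'" and init2: "y2 0 = 0" "y2' 0 = 1"
    and P: "\<And>x. \<bar>p x\<bar> \<le> P" and "per1 p"
    and no_periodic_kernel: "\<And>z z'. solves_lin_ode p (\<lambda>_. 0) z z' \<Longrightarrow> per1 z \<Longrightarrow> z = (\<lambda>_. 0)"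
  shows "(y1 1 - 1) * (y2' 1 - 1) - y2 1 * y1' 1 \<noteq> 0"
proof
  assume "(y1 1 - 1) * (y2' 1 - 1) - y2 1 * y1' 1 = 0"
  then obtain s t where st: "(s, t) \<noteq> (0, 0)"
    "(y1 1 - 1) * s + y2 1 * t = 0" "y1' 1 * s + (y2' 1 - 1) * t = 0"
    by (rule lin2_kernel)
  define z where "z x = s * y1 x + t * y2 x" for x
  define z' where "z' x = s * y1' x + t * y2' x" for x
  have z: "solves_lin_ode p (\<lambda>_. 0) z z'"
    using solves_lin_ode_lincomb[OF y1 y2, of s t] by (simp add: z_def[abs_def] z'_def[abs_def])
  have "per1 z"
    using st init1 init2 \<open>per1 p\<close>
    by (intro solves_lin_ode_periodic[OF z P]) (auto simp: z_def z'_def per1_def algebra_simps)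
  then have "z = (\<lambda>_. 0)"
    by (rule no_periodic_kernel[OF z])
  moreover have "z' 0 = deriv z 0"
    by (rule solves_lin_ode_deriv_eq[OF z])
  ultimately have "z 0 = 0" "z' 0 = 0"
    by simp_all
  then show False
    using st(1) init1 init2 by (simp add: z_def z'_def)
qed

text \<open>Fredholm alternative: the monodromy defect (s, t) |-> (z 1 - z 0, z' 1 - z' 0) of the
  homogeneous solution z with initial data (s, t) is injective, since the periodic kernel is
  trivial, so it is onto and can absorb the defect of a particular solution.\<close>

lemma periodic_lin_ode_solvable:
  assumes cont: "continuous_on UNIV p" "continuous_on UNIV h" and per: "per1 p" "per1 h"
    and no_periodic_kernel: "\<And>z z'. solves_lin_ode p (\<lambda>_. 0) z z' \<Longrightarrow> per1 z \<Longrightarrow> z = (\<lambda>_. 0)"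
  obtains y y' where "solves_lin_ode p h y y'" and "per1 y"
proof -
  obtain P where P: "\<And>x. \<bar>p x\<bar> \<le> P"
    using per1_bounded[OF per(1) cont(1)] by blast
  obtain H where H: "\<And>x. \<bar>h x\<bar> \<le> H"
    using per1_bounded[OF per(2) cont(2)] by blast
  have cont0: "continuous_on UNIV (\<lambda>_. 0 :: real)" and bound0: "\<And>x::real. \<bar>0 :: real\<bar> \<le> 0"
    by simp_all
  obtain y0 y0' where y0: "solves_lin_ode p h y0 y0'" and init0: "y0 0 = 0" "y0' 0 = 0"
    using lin_ode_ivp_exists[OF cont P H] by blast
  obtain y1 y1' where y1: "solves_lin_ode p (\<lambda>_. 0) y1 y1'" and init1: "y1 0 = 1" "y1' 0 = 0"
    using lin_ode_ivp_exists[OF cont(1) cont0 P bound0] by blast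
  obtain y2 y2' where y2: "solves_lin_ode p (\<lambda>_. 0) y2 y2'" and init2: "y2 0 = 0" "y2' 0 = 1"
    using lin_ode_ivp_exists[OF cont(1) cont0 P bound0] by blast
  obtain s t where st: "(y1 1 - 1) * s + y2 1 * t = - y0 1" "y1' 1 * s + (y2' 1 - 1) * t = - y0' 1"
    using lin2_solvable[OF monodromy_det_nonzero[OF y1 init1 y2 init2 P per(1) no_periodic_kernel]] .
  define y where "y x = y0 x + (s * y1 x + t * y2 x)" for x
  define y' where "y' x = y0' x + (s * y1' x + t * y2' x)" for x
  have sol: "solves_lin_ode p h y y'"
    using solves_lin_ode_lincomb[OF y0 solves_lin_ode_lincomb[OF y1 y2, of s t], of 1 1]
    by (simp add: y_def[abs_def] y'_def[abs_def])
  moreover have "per1 y"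
    using st init0 init1 init2
    by (intro solves_lin_ode_periodic[OF sol P per]) (auto simp: y_def y'_def algebra_simps)
  ultimately show thesis
    by (rule that)
qed

section \<open>Fourier coefficients on [0,1]\<close>

lemma quadratic_nonneg_imp_discriminant:
  fixes a b c :: real
  assumes "c \<ge> 0" and nonneg: "\<And>t. 0 \<le> a - 2 * t * b + t\<^sup>2 * c"
  shows "b\<^sup>2 \<le> a * c"
proof (cases "c = 0")
  case True
  have "b = 0"
  proof (rule ccontr)
    assume "b \<noteq> 0"
    then show False
      using nonneg[of "(a + 1) / (2 * b)"] True by simp
  qed
  then show ?thesis
    using True by simp
next
  case False
  then have "c > 0"
    using \<open>c \<ge> 0\<close> by simp
  moreover have "0 \<le> a - 2 * (b / c) * b + (b / c)\<^sup>2 * c"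
    by (rule nonneg)
  ultimately show ?thesis
    by (simp add: power2_eq_square field_simps)
qed

lemma Cauchy_Schwarz_integral:
  fixes u v :: "'a::euclidean_space \<Rightarrow> real"
  assumes "(\<lambda>x. (u x)\<^sup>2) integrable_on S" and "(\<lambda>x. u x * v x) integrable_on S"
    and "(\<lambda>x. (v x)\<^sup>2) integrable_on S"
  shows "(integral S (\<lambda>x. u x * v x))\<^sup>2 \<le> integral S (\<lambda>x. (u x)\<^sup>2) * integral S (\<lambda>x. (v x)\<^sup>2)"
proof (rule quadratic_nonneg_imp_discriminant)
  show "integral S (\<lambda>x. (v x)\<^sup>2) \<ge> 0"
    by (rule integral_nonneg[OF assms(3)]) simp
  fix t
  note integrals = assms[THEN integrable_integral]
  have "((\<lambda>x. (u x)\<^sup>2 - (2 * t) * (u x * v x) + t\<^sup>2 * (v x)\<^sup>2) has_integral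
      integral S (\<lambda>x. (u x)\<^sup>2) - (2 * t) * integral S (\<lambda>x. u x * v x) + t\<^sup>2 * integral S (\<lambda>x. (v x)\<^sup>2)) S"
    by (intro has_integral_add has_integral_diff has_integral_mult_right integrals)
  moreover have "(\<lambda>x. (u x)\<^sup>2 - (2 * t) * (u x * v x) + t\<^sup>2 * (v x)\<^sup>2) = (\<lambda>x. (u x - t * v x)\<^sup>2)"
    by (auto simp: power2_eq_square algebra_simps)
  ultimately have "((\<lambda>x. (u x - t * v x)\<^sup>2) has_integral
      integral S (\<lambda>x. (u x)\<^sup>2) - 2 * t * integral S (\<lambda>x. u x * v x) + t\<^sup>2 * integral S (\<lambda>x. (v x)\<^sup>2)) S"
    by simp
  then show "0 \<le> integral S (\<lambda>x. (u x)\<^sup>2) - 2 * t * integral S (\<lambda>x. u x * v x) +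
      t\<^sup>2 * integral S (\<lambda>x. (v x)\<^sup>2)"
    by (rule has_integral_nonneg) simp
qed

lemma integrable_on_01: "continuous_on {0..1} f \<Longrightarrow> (f :: real \<Rightarrow> real) integrable_on {0..1}"
  by (rule integrable_continuous_real)

lemma ip01_eq_integral:
  assumes "continuous_on {0..1} f" and "continuous_on {0..1} g"
  shows "ip01 f g = integral {0..1} (\<lambda>x. f x * g x)"
  unfolding ip01_def
  by (intro lebesgue_integral_eq_integral continuous_imp_integrable_real continuous_intros assms) auto

lemma L2_01_if_continuous: "continuous_on {0..1} f \<Longrightarrow> L2_01 f"
  unfolding L2_01_def
  by (intro conjI continuous_imp_measurable_on_sets_lebesgue continuous_imp_integrable_real
      continuous_intros) auto

lemma ONB01_partial_sums_converge:
  assumes ONB: "ONB01 \<psi>" and \<psi>: "\<And>n. continuous_on {0..1} (\<psi> n)" and f: "continuous_on {0..1} f"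
  shows "(\<lambda>N. integral {0..1} (\<lambda>x. (f x - (\<Sum>n<N. integral {0..1} (\<lambda>x. f x * \<psi> n x) * \<psi> n x))\<^sup>2))
           \<longlonglongrightarrow> 0"
proof -
  have rest: "continuous_on {0..1} (\<lambda>x. f x - (\<Sum>n<N. integral {0..1} (\<lambda>x. f x * \<psi> n x) * \<psi> n x))"
    for N
    by (intro continuous_intros \<psi> f)
  have "(\<lambda>N. ip01 (\<lambda>x. f x - (\<Sum>n<N. ip01 f (\<psi> n) * \<psi> n x))
                   (\<lambda>x. f x - (\<Sum>n<N. ip01 f (\<psi> n) * \<psi> n x))) \<longlonglongrightarrow> 0"
    using ONB L2_01_if_continuous[OF f] unfolding ONB01_def by blast
  then show ?thesis
    using ip01_eq_integral[OF rest rest] ip01_eq_integral[OF f \<psi>] by (simp add: power2_eq_square)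
qed

text \<open>The L^2 convergence of the Fourier series of f is tested against g by Cauchy-Schwarz.\<close>

lemma ONB01_parseval:
  assumes ONB: "ONB01 \<psi>" and \<psi>: "\<And>n. continuous_on {0..1} (\<psi> n)"
    and f: "continuous_on {0..1} f" and g: "continuous_on {0..1} g"
  shows "(\<lambda>N. \<Sum>n<N. integral {0..1} (\<lambda>x. f x * \<psi> n x) * integral {0..1} (\<lambda>x. g x * \<psi> n x))
           \<longlonglongrightarrow> integral {0..1} (\<lambda>x. f x * g x)"
proof -
  define S where "S N x = (\<Sum>n<N. integral {0..1} (\<lambda>x. f x * \<psi> n x) * \<psi> n x)" for N x
  have rest: "continuous_on {0..1} (\<lambda>x. f x - S N x)" for N
    unfolding S_def by (intro continuous_intros \<psi> f)
  have rest_to_0: "(\<lambda>N. integral {0..1} (\<lambda>x. (f x - S N x)\<^sup>2)) \<longlonglongrightarrow> 0"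
    using ONB01_partial_sums_converge[OF ONB \<psi> f] by (simp add: S_def)
  define e where "e N = integral {0..1} (\<lambda>x. (f x - S N x) * g x)" for N
  have e: "e N = integral {0..1} (\<lambda>x. f x * g x) -
      (\<Sum>n<N. integral {0..1} (\<lambda>x. f x * \<psi> n x) * integral {0..1} (\<lambda>x. g x * \<psi> n x))" for N
  proof -
    have "e N = integral {0..1} (\<lambda>x. f x * g x) - integral {0..1} (\<lambda>x. S N x * g x)"
      unfolding e_def S_def
      by (subst integral_diff[symmetric])
         (auto intro!: integrable_on_01 continuous_intros \<psi> f g simp: algebra_simps)
    also have "integral {0..1} (\<lambda>x. S N x * g x) =
        (\<Sum>n<N. integral {0..1} (\<lambda>x. integral {0..1} (\<lambda>x. f x * \<psi> n x) * (g x * \<psi> n x)))"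
      unfolding S_def sum_distrib_right
      by (subst integral_sum)
         (auto intro!: integrable_on_01 continuous_intros \<psi> g simp: algebra_simps)
    finally show ?thesis
      by simp
  qed
  have "(\<lambda>N. (e N)\<^sup>2) \<longlonglongrightarrow> 0"
  proof (rule Lim_null_comparison)
    show "\<forall>\<^sub>F N in sequentially. norm ((e N)\<^sup>2) \<le>
        integral {0..1} (\<lambda>x. (f x - S N x)\<^sup>2) * integral {0..1} (\<lambda>x. (g x)\<^sup>2)"
      using Cauchy_Schwarz_integral[of "\<lambda>x. f x - S _ x" "{0..1}" g]
      by (simp add: e_def integrable_on_01 continuous_intros rest g)
    show "(\<lambda>N. integral {0..1} (\<lambda>x. (f x - S N x)\<^sup>2) * integral {0..1} (\<lambda>x. (g x)\<^sup>2)) \<longlonglongrightarrow> 0"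
      using tendsto_mult_left_zero[OF rest_to_0] by simp
  qed
  then have "e \<longlonglongrightarrow> 0"
    using tendsto_real_sqrt[of "\<lambda>N. (e N)\<^sup>2" 0] by (simp add: tendsto_rabs_zero_iff)
  then have "(\<lambda>N. integral {0..1} (\<lambda>x. f x * g x) - e N) \<longlonglongrightarrow> integral {0..1} (\<lambda>x. f x * g x)"
    using tendsto_diff[OF tendsto_const] by fastforce
  then show ?thesis
    by (simp add: e)
qed

lemma ONB01_coefficients_0_imp_0:
  assumes ONB: "ONB01 \<psi>" and \<psi>: "\<And>n. continuous_on {0..1} (\<psi> n)"
    and f: "continuous_on {0..1} f" and coeff: "\<And>n. integral {0..1} (\<lambda>x. f x * \<psi> n x) = 0"
    and x: "x \<in> {0..1}"
  shows "f x = 0"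
proof -
  have "(\<lambda>N. 0) \<longlonglongrightarrow> integral {0..1} (\<lambda>x. f x * f x)"
    using ONB01_parseval[OF ONB \<psi> f f] by (simp add: coeff)
  then have "integral {0..1} (\<lambda>x. (f x)\<^sup>2) = 0"
    by (simp add: LIMSEQ_const_iff power2_eq_square)
  then show ?thesis
    using integral_eq_0_iff[of 0 1 "\<lambda>x. (f x)\<^sup>2"] continuous_on_power[OF f, of 2] x by auto
qed

section \<open>The nonlocal eigenvalue problem\<close>

locale periodic_eigenbasis =
  fixes D :: real and A :: "real \<Rightarrow> real" and lam :: "nat \<Rightarrow> real" and \<psi> :: "nat \<Rightarrow> real \<Rightarrow> real"
  assumes D_pos: "D > 0" and continuous_A: "continuous_on UNIV A" and per1_A: "per1 A"
    and per1_\<psi>: "\<And>n. per1 (\<psi> n)" and twice_diff_\<psi>: "\<And>n. twice_diff (\<psi> n)"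
    and eigen_equation: "\<And>n x. D * deriv (deriv (\<psi> n)) x + (A x - lam n) * \<psi> n x = 0"
    and ONB: "ONB01 \<psi>"
begin

lemma continuous_\<psi>: "continuous_on {0..1} (\<psi> n)"
  using twice_diff_continuous[OF twice_diff_\<psi>] continuous_on_subset by blast

text \<open>Green's identity cancels the second derivatives.\<close>

lemma coefficient_equation:
  assumes \<phi>: "per1 \<phi>" "twice_diff \<phi>" and g: "continuous_on UNIV g"
    and eq: "\<And>x. D * deriv (deriv \<phi>) x + (A x - \<mu>) * \<phi> x = g x"
  shows "(lam n - \<mu>) * integral {0..1} (\<lambda>x. \<phi> x * \<psi> n x) = integral {0..1} (\<lambda>x. g x * \<psi> n x)"
proof -
  have "deriv (deriv \<phi>) x * \<psi> n x - \<phi> x * deriv (deriv (\<psi> n)) x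
      = (g x * \<psi> n x - (lam n - \<mu>) * (\<phi> x * \<psi> n x)) / D" for x
  proof -
    have \<phi>'': "deriv (deriv \<phi>) x = (g x - (A x - \<mu>) * \<phi> x) / D"
      using eq[of x] D_pos by (simp add: field_simps)
    have \<psi>'': "deriv (deriv (\<psi> n)) x = - (A x - lam n) * \<psi> n x / D"
      using eigen_equation[of n x] D_pos by (simp add: field_simps)
    show ?thesis
      unfolding \<phi>'' \<psi>'' using D_pos by (simp add: field_simps)
  qed
  then have "((\<lambda>x. (g x * \<psi> n x - (lam n - \<mu>) * (\<phi> x * \<psi> n x)) / D) has_integral 0) {0..1}"
    using green_identity_per1[OF \<phi>(2,1) twice_diff_\<psi>[of n] per1_\<psi>[of n]] by simp
  moreover have "((\<lambda>x. (g x * \<psi> n x - (lam n - \<mu>) * (\<phi> x * \<psi> n x)) / D) has_integral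
      (integral {0..1} (\<lambda>x. g x * \<psi> n x) - (lam n - \<mu>) * integral {0..1} (\<lambda>x. \<phi> x * \<psi> n x)) / D) {0..1}"
  proof -
    have "continuous_on {0..1} g" "continuous_on {0..1} \<phi>"
      using g twice_diff_continuous[OF \<phi>(2)] continuous_on_subset by blast+
    from this(1) have "(\<lambda>x. g x * \<psi> n x) integrable_on {0..1}"
      by (intro integrable_on_01 continuous_intros continuous_\<psi>)
    moreover from \<open>continuous_on {0..1} \<phi>\<close> have "(\<lambda>x. \<phi> x * \<psi> n x) integrable_on {0..1}"
      by (intro integrable_on_01 continuous_intros continuous_\<psi>)
    ultimately show ?thesis
      by (intro has_integral_divide has_integral_diff has_integral_mult_right integrable_integral)
  qed
  ultimately have "(integral {0..1} (\<lambda>x. g x * \<psi> n x) -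
      (lam n - \<mu>) * integral {0..1} (\<lambda>x. \<phi> x * \<psi> n x)) / D = 0"
    by (rule has_integral_unique[symmetric])
  then show ?thesis
    using D_pos by simp
qed

lemma per1_eq_0_if_coefficients_0:
  assumes "per1 \<phi>" and "continuous_on UNIV \<phi>"
    and "\<And>n. integral {0..1} (\<lambda>x. \<phi> x * \<psi> n x) = 0"
  shows "\<phi> x = 0"
proof (rule per1_eq_0[OF assms(1)])
  show "\<phi> y = 0" if "y \<in> {0..1}" for y
    using ONB01_coefficients_0_imp_0[OF ONB continuous_\<psi> continuous_on_subset[OF assms(2)] assms(3) that]
    by simp
qed

lemma homogeneous_solution_eq_0:
  assumes \<mu>: "\<mu> \<notin> range lam" and \<phi>: "per1 \<phi>" "twice_diff \<phi>"
    and eq: "\<And>x. D * deriv (deriv \<phi>) x + (A x - \<mu>) * \<phi> x = 0"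
  shows "\<phi> x = 0"
proof (rule per1_eq_0_if_coefficients_0[OF \<phi>(1) twice_diff_continuous[OF \<phi>(2)]])
  fix n
  have "(lam n - \<mu>) * integral {0..1} (\<lambda>x. \<phi> x * \<psi> n x) = 0"
    using coefficient_equation[OF \<phi> _ eq] by simp
  moreover have "lam n - \<mu> \<noteq> 0"
    using \<mu> by auto
  ultimately show "integral {0..1} (\<lambda>x. \<phi> x * \<psi> n x) = 0"
    by simp
qed

lemma resolvent_solution_exists:
  assumes \<mu>: "\<mu> \<notin> range lam" and g: "continuous_on UNIV g" "per1 g"
  obtains \<phi> where "per1 \<phi>" and "twice_diff \<phi>"
    and "\<And>x. D * deriv (deriv \<phi>) x + (A x - \<mu>) * \<phi> x = g x"
proof -
  define p where "p x = (A x - \<mu>) / D" for x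
  define h where "h x = g x / D" for x
  have cont: "continuous_on UNIV p" "continuous_on UNIV h"
    unfolding p_def[abs_def] h_def[abs_def] using D_pos
    by (auto intro!: continuous_intros continuous_A g)
  have per: "per1 p" "per1 h"
    using per1_A g(2) by (simp_all add: per1_def p_def h_def)
  have eq: "D * deriv (deriv y) x + (A x - \<mu>) * y x = D * k x"
    if "solves_lin_ode p k y y'" for k y y' x
    using solves_lin_ode_twice_diff(2)[OF that] D_pos by (simp add: p_def field_simps)
  obtain y y' where y: "solves_lin_ode p h y y'" and "per1 y"
  proof (rule periodic_lin_ode_solvable[OF cont per])
    fix z z'
    assume z: "solves_lin_ode p (\<lambda>_. 0) z z'" and "per1 z"
    show "z = (\<lambda>_. 0)"
      using homogeneous_solution_eq_0[OF \<mu> \<open>per1 z\<close> solves_lin_ode_twice_diff(1)[OF z]] eq[OF z]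
      by auto
  qed
  show thesis
    using eq[OF y] solves_lin_ode_twice_diff(1)[OF y] \<open>per1 y\<close> D_pos
    by (intro that[of y]) (auto simp: h_def)
qed

lemma pairing_resolvent_sums:
  assumes \<mu>: "\<mu> \<notin> range lam" and C: "continuous_on UNIV C" "per1 C"
    and \<phi>: "per1 \<phi>" "twice_diff \<phi>"
    and eq: "\<And>x. D * deriv (deriv \<phi>) x + (A x - \<mu>) * \<phi> x = k * C x"
  shows "(\<lambda>n. k * (integral {0..1} (\<lambda>y. C y * \<psi> n y))\<^sup>2 / (lam n - \<mu>))
           sums integral {0..1} (\<lambda>y. C y * \<phi> y)"
proof -
  have "integral {0..1} (\<lambda>x. \<phi> x * \<psi> n x) = k * integral {0..1} (\<lambda>y. C y * \<psi> n y) / (lam n - \<mu>)" for n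
  proof -
    have "(lam n - \<mu>) * integral {0..1} (\<lambda>x. \<phi> x * \<psi> n x) = integral {0..1} (\<lambda>x. k * (C x * \<psi> n x))"
      using coefficient_equation[OF \<phi> _ eq] C(1) by (simp add: continuous_intros mult.assoc)
    moreover have "lam n - \<mu> \<noteq> 0"
      using \<mu> by auto
    ultimately show ?thesis
      by (simp add: field_simps)
  qed
  moreover have "(\<lambda>N. \<Sum>n<N. integral {0..1} (\<lambda>x. C x * \<psi> n x) * integral {0..1} (\<lambda>x. \<phi> x * \<psi> n x))
      \<longlonglongrightarrow> integral {0..1} (\<lambda>x. C x * \<phi> x)"
    using continuous_on_subset[OF C(1)] continuous_on_subset[OF twice_diff_continuous[OF \<phi>(2)]]
    by (intro ONB01_parseval[OF ONB continuous_\<psi>]) auto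
  ultimately show ?thesis
    by (simp add: sums_def power2_eq_square mult_ac)
qed

definition nonlocal_eigenfunction :: "(real \<Rightarrow> real) \<Rightarrow> real \<Rightarrow> real \<Rightarrow> (real \<Rightarrow> real) \<Rightarrow> bool" where
  "nonlocal_eigenfunction C M \<nu> \<phi> \<longleftrightarrow> per1 \<phi> \<and> twice_diff \<phi> \<and> (\<exists>x. \<phi> x \<noteq> 0) \<and>
     (\<forall>x. D * deriv (deriv \<phi>) x + (A x - \<nu>) * \<phi> x = M * C x * integral {0..1} (\<lambda>y. C y * \<phi> y))"

lemma nonlocal_eigenfunction_imp_sums:
  assumes \<nu>: "\<nu> \<notin> range lam" and C: "continuous_on UNIV C" "per1 C" and M: "M \<noteq> 0"
    and "nonlocal_eigenfunction C M \<nu> \<phi>"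
  shows "(\<lambda>n. (integral {0..1} (\<lambda>y. C y * \<psi> n y))\<^sup>2 / (lam n - \<nu>)) sums (1 / M)"
    (is "?series sums _")
proof -
  define c where "c = integral {0..1} (\<lambda>y. C y * \<phi> y)"
  have \<phi>: "per1 \<phi>" "twice_diff \<phi>" and nonzero: "\<exists>x. \<phi> x \<noteq> 0"
    and eq: "\<And>x. D * deriv (deriv \<phi>) x + (A x - \<nu>) * \<phi> x = (M * c) * C x"
    using assms(5) by (auto simp: nonlocal_eigenfunction_def c_def mult_ac)
  have "c \<noteq> 0"
  proof
    assume "c = 0"
    then have "D * deriv (deriv \<phi>) x + (A x - \<nu>) * \<phi> x = 0" for x
      using eq[of x] by simp
    with nonzero show False
      using homogeneous_solution_eq_0[OF \<nu> \<phi>] by blast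
  qed
  have "(\<lambda>n. (M * c) * ?series n) sums c"
    using pairing_resolvent_sums[OF \<nu> C \<phi> eq] by (simp add: c_def)
  then show "?series sums (1 / M)"
    using sums_mult_iff[of "M * c" ?series "1 / M"] M \<open>c \<noteq> 0\<close> by simp
qed

lemma sums_imp_nonlocal_eigenfunction:
  assumes \<nu>: "\<nu> \<notin> range lam" and C: "continuous_on UNIV C" "per1 C" and M: "M \<noteq> 0"
    and series: "(\<lambda>n. (integral {0..1} (\<lambda>y. C y * \<psi> n y))\<^sup>2 / (lam n - \<nu>)) sums (1 / M)"
      (is "?series sums _")
  obtains \<phi> where "nonlocal_eigenfunction C M \<nu> \<phi>"
proof -
  obtain \<phi> where \<phi>: "per1 \<phi>" "twice_diff \<phi>"
    and eq: "\<And>x. D * deriv (deriv \<phi>) x + (A x - \<nu>) * \<phi> x = M * C x"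
  proof (rule resolvent_solution_exists[OF \<nu>])
    show "continuous_on UNIV (\<lambda>x. M * C x)"
      by (intro continuous_intros C(1))
    show "per1 (\<lambda>x. M * C x)"
      using C(2) by (simp add: per1_def)
  qed blast
  have "(\<lambda>n. M * ?series n) sums integral {0..1} (\<lambda>y. C y * \<phi> y)"
    using pairing_resolvent_sums[OF \<nu> C \<phi> eq] by simp
  moreover have "(\<lambda>n. M * ?series n) sums 1"
    using sums_mult[OF series, of M] M by simp
  ultimately have pairing: "integral {0..1} (\<lambda>y. C y * \<phi> y) = 1"
    by (rule sums_unique2)
  have "\<exists>x. \<phi> x \<noteq> 0"
  proof (rule ccontr)
    assume "\<not> (\<exists>x. \<phi> x \<noteq> 0)"
    then have "integral {0..1} (\<lambda>y. C y * \<phi> y) = 0"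
      by simp
    with pairing show False
      by simp
  qed
  with \<phi> eq pairing show thesis
    by (intro that[of \<phi>]) (simp add: nonlocal_eigenfunction_def)
qed

end

lemma steady_state_continuous:
  assumes "steady_state D \<kappa> U"
  shows "per1 U" and "continuous_on UNIV U"
  using assms twice_diff_continuous[of U] by (auto simp: steady_state_def)

lemma Zc_pos:
  assumes "continuous_on UNIV U"
  shows "Zc U > 0"
proof -
  have "continuous_on {0..1} (\<lambda>y. exp (U y))"
    by (intro continuous_intros continuous_on_subset[OF assms]) simp
  then have "integral {0..1} (\<lambda>_. 0) < integral {0..1} (\<lambda>y. exp (U y))"
    using Equivalence_Lebesgue_Henstock_Integration.integral_less[of 0 1 "\<lambda>_. 0" "\<lambda>y. exp (U y)"]
    by simp
  then show ?thesis
    by (simp add: Zc_def)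
qed

theorem mainTheorem8:
  fixes D \<kappa> \<nu> :: real and U :: "real \<Rightarrow> real"
    and lam :: "nat \<Rightarrow> real" and psi :: "nat \<Rightarrow> real \<Rightarrow> real"
  assumes "D > 0" and "\<kappa> > 0" and "steady_state D \<kappa> U"
    and "\<forall>n. local_eigpair D \<kappa> U (lam n) (psi n)"
    and "ONB01 psi"
    and "lam 0 > lam 1"
    and "\<forall>k. lam (2*k+1) \<ge> lam (2*k+2) \<and> lam (2*k+2) > lam (2*k+3)"
    and "\<nu> \<notin> range lam"
  shows "nonlocal_eig D \<kappa> U \<nu> \<longleftrightarrow>
    (\<lambda>n. (integral {0..1} (\<lambda>y. Cf U y * psi n y))\<^sup>2 / (lam n - \<nu>)) sums (1 / Mc \<kappa> U)"
proof -
  have U: "per1 U" "continuous_on UNIV U"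
    using steady_state_continuous[OF assms(3)] by blast+
  have Z: "Zc U > 0"
    using Zc_pos[OF U(2)] .
  interpret periodic_eigenbasis D "Acoef \<kappa> U" lam psi
  proof
    show "continuous_on UNIV (Acoef \<kappa> U)"
      unfolding Acoef_def[abs_def] using Z by (intro continuous_intros U) auto
    show "per1 (Acoef \<kappa> U)"
      using U(1) by (simp add: per1_def Acoef_def)
  qed (use assms(1,4,5) in \<open>auto simp: local_eigpair_def\<close>)
  have C: "continuous_on UNIV (Cf U)" "per1 (Cf U)"
    using U unfolding Cf_def[abs_def] per1_def by (auto intro!: continuous_intros)
  have M: "Mc \<kappa> U \<noteq> 0"
    using assms(2) Z by (simp add: Mc_def)
  have "nonlocal_eig D \<kappa> U \<nu> \<longleftrightarrow> (\<exists>\<phi>. nonlocal_eigenfunction (Cf U) (Mc \<kappa> U) \<nu> \<phi>)"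
    by (simp add: nonlocal_eig_def nonlocal_eigenfunction_def)
  then show ?thesis
    using nonlocal_eigenfunction_imp_sums[OF assms(8) C M] sums_imp_nonlocal_eigenfunction[OF assms(8) C M]
    by blast
qed

end
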